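(* Let $X$ be a space possessing a binary normal closed subbase $\mathcal S$, and let $Z$ be an arbitrary space. Then every $\mathcal S$-continuous set-valued map $\Phi\colon Z\to X$ whose values $\Phi(z)$, $z\in Z$, are (nonempty) closed $\mathcal S$-convex subsets of $X$ has a continuous single-valued selection, i.e. a continuous map $h\colon Z\to X$ with $h(z)\in\Phi(z)$ for all $z\in Z$. More generally, if $A\subset Z$ is closed and every continuous map from $A$ to $X$ can be extended to a continuous map from $Z$ to $X$, then every continuous selection $g\colon A\to X$ for $\Phi|A$ extends to a continuous selection $h\colon Z\to X$ for $\Phi$ (i.e. $h|A=g$).
   Context: All spaces are Tychonoff; single-valued maps are continuous; set-valued maps have nonempty values. A family $\mathcal S$ of closed subsets of $X$ is a closed subbase if every closed subset of $X$ is an intersection of finite unions of members of $\mathcal S$. A family of sets is linked if any two of its members intersect; $\mathcal S$ is binary if every linked subfamily of $\mathcal S$ has nonempty intersection. $\mathcal S$ is normal if for every $S_0,S_1\in\mathcal S$ with $S_0\cap S_1=\varnothing$ there exist $T_0,T_1\in\mathcal S$ with $S_0\cap T_1=\varnothing=T_0\cap S_1$ and $T_0\cup T_1=X$. For $B\subset X$ let $I_{\mathcal S}(B)=\bigcap\{S\in\mathcal S: B\subset S\}$. A set $B\subset X$ is $\mathcal S$-convex if $I_{\mathcal S}(\{x,y\})\subset B$ for all $x,y\in B$. A set-valued map $\Phi\colon Z\to X$ is $\mathcal S$-continuous if for every $S\in\mathcal S$ both sets $\{z\in Z:\Phi(z)\cap(X\setminus S)\neq\varnothing\}$ and $\{z\in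 Z:\Phi(z)\subset X\setminus S\}$ are open in $Z$. *)

theory Defs
  imports "HOL-Analysis.Analysis"
begin

definition tychonoff_space :: "'a topology \<Rightarrow> bool" where
  "tychonoff_space X \<longleftrightarrow> completely_regular_space X \<and> t1_space X"

definition closed_subbase :: "'a topology \<Rightarrow> 'a set set \<Rightarrow> bool" where
  "closed_subbase X \<S> \<longleftrightarrow>
     (\<forall>S\<in>\<S>. closedin X S) \<and>
     (\<forall>C. closedin X C \<longrightarrow>
        (\<exists>\<F>. (\<forall>B\<in>\<F>. \<exists>\<T>. finite \<T> \<and> \<T> \<subseteq> \<S> \<and> B = \<Union>\<T>) \<and> C = topspace X \<inter> \<Inter>\<F>))"

definition linked :: "'a set set \<Rightarrow> bool" where
  "linked \<F> \<longleftrightarrow> (\<forall>A\<in>\<F>. \<forall>B\<in>\<F>. A \<inter> B \<noteq> {})"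

definition binary_family :: "'a set set \<Rightarrow> bool" where
  "binary_family \<S> \<longleftrightarrow> (\<forall>\<F>. \<F> \<subseteq> \<S> \<and> linked \<F> \<longrightarrow> \<Inter>\<F> \<noteq> {})"

definition normal_family :: "'a topology \<Rightarrow> 'a set set \<Rightarrow> bool" where
  "normal_family X \<S> \<longleftrightarrow>
     (\<forall>S0\<in>\<S>. \<forall>S1\<in>\<S>. S0 \<inter> S1 = {} \<longrightarrow>
        (\<exists>T0\<in>\<S>. \<exists>T1\<in>\<S>. S0 \<inter> T1 = {} \<and> T0 \<inter> S1 = {} \<and> T0 \<union> T1 = topspace X))"

definition I_hull :: "'a topology \<Rightarrow> 'a set set \<Rightarrow> 'a set \<Rightarrow> 'a set" where
  "I_hull X \<S> B = topspace X \<inter> \<Inter>{S\<in>\<S>. B \<subseteq> S}"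

definition S_convex :: "'a topology \<Rightarrow> 'a set set \<Rightarrow> 'a set \<Rightarrow> bool" where
  "S_convex X \<S> B \<longleftrightarrow> (\<forall>x\<in>B. \<forall>y\<in>B. I_hull X \<S> {x, y} \<subseteq> B)"

definition S_continuous ::
  "'b topology \<Rightarrow> 'a topology \<Rightarrow> 'a set set \<Rightarrow> ('b \<Rightarrow> 'a set) \<Rightarrow> bool" where
  "S_continuous Z X \<S> \<Phi> \<longleftrightarrow>
     (\<forall>S\<in>\<S>. openin Z {z\<in>topspace Z. \<Phi> z \<inter> (topspace X - S) \<noteq> {}} \<and>
             openin Z {z\<in>topspace Z. \<Phi> z \<subseteq> topspace X - S})"

end

theory Submission
  imports Defs
begin

text \<open>A binary closed subbase makes \<open>X\<close> compact (Alexander's subbase lemma: a linked family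
  of subbase members has a common point). For a nonempty closed \<open>\<S>\<close>-convex set \<open>C\<close> and a point
  \<open>p\<close>, the members of \<open>\<S>\<close> that contain \<open>p\<close> and meet \<open>C\<close> have, together with \<open>C\<close>, the finite
  intersection property (binarity plus convexity), so they meet \<open>C\<close> in a point; normality makes
  this point unique. This gate point depends continuously on \<open>p\<close> and on an \<open>\<S>\<close>-continuous
  \<open>C\<close>, and it equals \<open>p\<close> when \<open>p \<in> C\<close>. Composing the gate map with a continuous extension of
  \<open>g\<close> therefore gives the required selection.\<close>

lemma binary_familyD: "binary_family \<S> \<Longrightarrow> \<F> \<subseteq> \<S> \<Longrightarrow> linked \<F> \<Longrightarrow> \<exists>x. x \<in> \<Inter>\<F>"
  unfolding binary_family_def by blast

lemma closed_subbase_closedin: "closed_subbase X \<S> \<Longrightarrow> S \<in> \<S> \<Longrightarrow> closedin X S"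
  by (simp add: closed_subbase_def)

lemma closed_subbase_subset_topspace: "closed_subbase X \<S> \<Longrightarrow> S \<in> \<S> \<Longrightarrow> S \<subseteq> topspace X"
  using closed_subbase_closedin closedin_subset by blast

lemma closed_subbase_separation:
  assumes "closed_subbase X \<S>" "closedin X D" "d \<in> D" "y \<in> topspace X" "y \<notin> D"
  shows "\<exists>T\<in>\<S>. d \<in> T \<and> y \<notin> T"
proof -
  obtain \<F> where \<F>: "\<forall>B\<in>\<F>. \<exists>\<T>. finite \<T> \<and> \<T> \<subseteq> \<S> \<and> B = \<Union>\<T>"
    and D: "D = topspace X \<inter> \<Inter>\<F>"
    using assms(1,2) unfolding closed_subbase_def by meson
  then obtain B where "B \<in> \<F>" "y \<notin> B" "d \<in> B"
    using assms(3-5) by auto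
  then obtain \<T> where "\<T> \<subseteq> \<S>" "B = \<Union>\<T>"
    using \<F> by blast
  with \<open>y \<notin> B\<close> \<open>d \<in> B\<close> show ?thesis by blast
qed

lemma closed_subbase_separates_points:
  assumes "closed_subbase X \<S>" "t1_space X" "x \<in> topspace X" "y \<in> topspace X" "x \<noteq> y"
  shows "\<exists>T\<in>\<S>. x \<in> T \<and> y \<notin> T"
  using closed_subbase_separation[OF assms(1) closedin_t1_singleton[OF assms(2,3)]] assms(4,5)
  by simp

lemma binary_closed_subbase_disjoint_member:
  assumes "closed_subbase X \<S>" "binary_family \<S>" "t1_space X"
    and "q \<in> topspace X" "S \<in> \<S>" "q \<notin> S" "S \<noteq> {}"
  shows "\<exists>T\<in>\<S>. q \<in> T \<and> T \<inter> S = {}"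
proof (rule ccontr)
  let ?\<L> = "insert S {T\<in>\<S>. q \<in> T}"
  assume "\<not> ?thesis"
  then have "linked ?\<L>"
    using assms(7) unfolding linked_def by auto
  moreover have "?\<L> \<subseteq> \<S>"
    using assms(5) by blast
  ultimately obtain x where x: "x \<in> \<Inter>?\<L>"
    using assms(2) unfolding binary_family_def by blast
  have "x \<in> topspace X" "x \<noteq> q"
    using x closed_subbase_subset_topspace[OF assms(1,5)] assms(6) by auto
  then show False
    using x closed_subbase_separates_points[OF assms(1,3,4)] by blast
qed

text \<open>Binarity turns the separation of a point from a subbase member into a screening by two
  members that cover \<open>X\<close>.\<close>
lemma normal_binary_closed_subbase_screening:
  assumes "closed_subbase X \<S>" "binary_family \<S>" "normal_family X \<S>" "t1_space X"
    and "x \<in> topspace X" "S \<in> \<S>" "x \<notin> S" "S \<noteq> {}"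
  obtains T0 T1 where "T0 \<in> \<S>" "T1 \<in> \<S>" "x \<notin> T0" "T1 \<inter> S = {}" "T0 \<union> T1 = topspace X"
proof -
  obtain T where T: "T \<in> \<S>" "x \<in> T" "T \<inter> S = {}"
    using binary_closed_subbase_disjoint_member[OF assms(1,2,4-8)] by blast
  then obtain T0 T1 where "T0 \<in> \<S>" "T1 \<in> \<S>" "S \<inter> T1 = {}" "T0 \<inter> T = {}" "T0 \<union> T1 = topspace X"
    using assms(3,6) unfolding normal_family_def by (metis inf_commute)
  with T show thesis
    using that by blast
qed

lemma closed_subbase_generates_topology:
  assumes "closed_subbase X \<S>"
  shows "X = topology (arbitrary union_of (finite intersection_of
                (\<lambda>V. V \<in> insert (topspace X) ((-) (topspace X) ` \<S>)) relative_to topspace X))"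
    (is "X = topology (arbitrary union_of (finite intersection_of ?P relative_to _))")
proof -
  let ?G = "arbitrary union_of (finite intersection_of ?P relative_to topspace X)"
  have "?G W" if W: "openin X W" for W
  proof -
    obtain \<F> where \<F>: "\<forall>B\<in>\<F>. \<exists>\<T>. finite \<T> \<and> \<T> \<subseteq> \<S> \<and> B = \<Union>\<T>"
      and co: "topspace X - W = topspace X \<inter> \<Inter>\<F>"
      using assms W unfolding closed_subbase_def by (meson closedin_diff closedin_topspace)
    have basic: "(finite intersection_of ?P relative_to topspace X) (topspace X - B)" if "B \<in> \<F>" for B
    proof -
      obtain \<T> where \<T>: "finite \<T>" "\<T> \<subseteq> \<S>" "B = \<Union>\<T>"
        using \<F> \<open>B \<in> \<F>\<close> by meson
      then have "(finite intersection_of ?P) (\<Inter>((-) (topspace X) ` \<T>))"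
        by (intro finite_intersection_of_Inter) (auto intro: finite_intersection_of_inc)
      moreover have "topspace X - B = topspace X \<inter> \<Inter>((-) (topspace X) ` \<T>)"
        using \<T>(3) by auto
      ultimately show ?thesis
        unfolding relative_to_def by blast
    qed
    have "W = \<Union>((-) (topspace X) ` \<F>)"
      using co openin_subset[OF W] by blast
    moreover have "?G (\<Union>((-) (topspace X) ` \<F>))"
      using basic by (blast intro: arbitrary_union_of_Union arbitrary_union_of_inc)
    ultimately show ?thesis
      by simp
  qed
  moreover have "openin X W" if "?G W" for W
  proof (rule minimal_topology_subbase[of ?P])
    show "openin X V" if "?P V" for V
      using that closed_subbase_closedin[OF assms] by auto
    show "openin (topology ?G) W"
      using \<open>?G W\<close> by (simp add: openin_subbase)
  qed simp
  ultimately show ?thesis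
    by (metis openin_inverse openin_subbase topology_eq)
qed

lemma continuous_map_into_closed_subbase:
  assumes "closed_subbase X \<S>" "h \<in> topspace Z \<rightarrow> topspace X"
    and "\<And>S. S \<in> \<S> \<Longrightarrow> openin Z {z \<in> topspace Z. h z \<notin> S}"
  shows "continuous_map Z X h"
proof -
  let ?P = "\<lambda>V. V \<in> insert (topspace X) ((-) (topspace X) ` \<S>)"
  have "continuous_map Z (topology (arbitrary union_of (finite intersection_of ?P
                            relative_to topspace X))) h"
  proof (rule continuous_map_into_topology_subbase, use assms(2) in force)
    fix V assume "?P V"
    then consider "V = topspace X" | S where "S \<in> \<S>" "V = topspace X - S"
      by blast
    then show "openin Z {z \<in> topspace Z. h z \<in> V}"
    proof cases
      case 1
      then have "{z \<in> topspace Z. h z \<in> V} = topspace Z"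
        using assms(2) by blast
      then show ?thesis
        by simp
    next
      case 2
      then have "{z \<in> topspace Z. h z \<in> V} = {z \<in> topspace Z. h z \<notin> S}"
        using assms(2) by blast
      then show ?thesis
        using assms(3) 2 by simp
    qed
  qed
  then show ?thesis
    using closed_subbase_generates_topology[OF assms(1)] by simp
qed

lemma binary_closed_subbase_compact_space:
  assumes "closed_subbase X \<S>" "binary_family \<S>"
  shows "compact_space X"
proof (rule Alexander_subbase_alt[OF _ _ closed_subbase_generates_topology[OF assms(1), symmetric]])
  show "topspace X \<subseteq> \<Union>(insert (topspace X) ((-) (topspace X) ` \<S>))"
    by blast
next
  fix \<C> assume \<C>: "\<C> \<subseteq> insert (topspace X) ((-) (topspace X) ` \<S>)" "topspace X \<subseteq> \<Union>\<C>"
  let ?\<F> = "{S \<in> \<S>. topspace X - S \<in> \<C>}"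
  have member: "\<exists>S\<in>?\<F>. V = topspace X - S" if "V \<in> \<C>" "V \<noteq> topspace X" for V
    using that \<C>(1) by blast
  show "\<exists>\<C>'. finite \<C>' \<and> \<C>' \<subseteq> \<C> \<and> topspace X \<subseteq> \<Union>\<C>'"
  proof (cases "linked ?\<F>")
    case True
    moreover have "?\<F> \<subseteq> \<S>"
      by blast
    ultimately obtain x where x: "x \<in> \<Inter>?\<F>"
      using binary_familyD[OF assms(2)] by meson
    show ?thesis
    proof (cases "topspace X \<in> \<C>")
      case True
      then show ?thesis
        by (intro exI[of _ "{topspace X}"]) auto
    next
      case False
      text \<open>Otherwise \<open>x\<close> would be a point of \<open>X\<close> covered by no member of \<open>\<C>\<close>.\<close>
      have "topspace X = {}"
      proof (rule ccontr)
        assume "topspace X \<noteq> {}"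
        then obtain V0 where "V0 \<in> \<C>"
          using \<C>(2) by blast
        then obtain S0 where "S0 \<in> ?\<F>"
          using member False by metis
        then have "x \<in> topspace X"
          using x closed_subbase_subset_topspace[OF assms(1)] by blast
        then obtain V where "V \<in> \<C>" "x \<in> V"
          using \<C>(2) by blast
        then show False
          using member[of V] False x by blast
      qed
      then show ?thesis
        by (intro exI[of _ "{}"]) auto
    qed
  next
    case False
    then obtain S1 S2 where "S1 \<in> ?\<F>" "S2 \<in> ?\<F>" "S1 \<inter> S2 = {}"
      unfolding linked_def by blast
    then show ?thesis
      by (intro exI[of _ "{topspace X - S1, topspace X - S2}"]) auto
  qed
qed

lemma binary_convex_meets_finite_Inter:
  assumes "closed_subbase X \<S>" "binary_family \<S>" "C \<noteq> {}" "S_convex X \<S> C"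
    and "finite \<F>" "\<F> \<subseteq> {S\<in>\<S>. p \<in> S \<and> S \<inter> C \<noteq> {}}"
  shows "C \<inter> \<Inter>\<F> \<noteq> {}"
  using assms(5,6)
proof (induction rule: finite_induct)
  case empty
  then show ?case
    using assms(3) by simp
next
  case (insert S \<F>)
  then have S: "S \<in> \<S>" "p \<in> S" "S \<inter> C \<noteq> {}" and \<F>: "\<F> \<subseteq> {S\<in>\<S>. p \<in> S \<and> S \<inter> C \<noteq> {}}"
    by auto
  obtain y where y: "y \<in> C" "y \<in> \<Inter>\<F>"
    using insert.IH[OF \<F>] by blast
  obtain c where c: "c \<in> S" "c \<in> C"
    using S(3) by blast
  text \<open>Members of \<open>insert S \<F>\<close> meet at \<open>p\<close>, members of \<open>\<F>\<close> and of \<open>?\<T>\<close> at \<open>y\<close>, and \<open>S\<close>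
    meets \<open>?\<T>\<close> at \<open>c\<close>; a common point of all of them lies in the hull of \<open>{y, c}\<close>.\<close>
  let ?\<T> = "{T\<in>\<S>. y \<in> T \<and> c \<in> T}"
  have p_in: "p \<in> D" if "D \<in> insert S \<F>" for D
    using that S(2) \<F> by blast
  have y_in: "y \<in> D" if "D \<in> \<F> \<union> ?\<T>" for D
    using that y(2) by blast
  have "linked (insert S \<F> \<union> ?\<T>)"
    unfolding linked_def
  proof (intro ballI)
    fix A B assume "A \<in> insert S \<F> \<union> ?\<T>" "B \<in> insert S \<F> \<union> ?\<T>"
    then consider "A \<in> insert S \<F>" "B \<in> insert S \<F>" | "A \<in> \<F> \<union> ?\<T>" "B \<in> \<F> \<union> ?\<T>"
      | "A = S" "B \<in> ?\<T>" | "A \<in> ?\<T>" "B = S"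
      by blast
    then show "A \<inter> B \<noteq> {}"
      by cases (use p_in y_in c(1) in blast)+
  qed
  moreover have "insert S \<F> \<union> ?\<T> \<subseteq> \<S>"
    using S(1) \<F> by blast
  ultimately obtain x where x: "x \<in> \<Inter>(insert S \<F> \<union> ?\<T>)"
    using binary_familyD[OF assms(2)] by meson
  then have "x \<in> I_hull X \<S> {y, c}"
    using closed_subbase_subset_topspace[OF assms(1) S(1)] unfolding I_hull_def by auto
  also have "I_hull X \<S> {y, c} \<subseteq> C"
    using assms(4) y(1) c(2) unfolding S_convex_def by blast
  finally show ?case
    using x by blast
qed

definition is_gate :: "'a set set \<Rightarrow> 'a set \<Rightarrow> 'a \<Rightarrow> 'a \<Rightarrow> bool" where
  "is_gate \<S> C p x \<longleftrightarrow> x \<in> C \<and> (\<forall>S\<in>\<S>. p \<in> S \<and> S \<inter> C \<noteq> {} \<longrightarrow> x \<in> S)"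

definition gate :: "'a set set \<Rightarrow> 'a set \<Rightarrow> 'a \<Rightarrow> 'a" where
  "gate \<S> C p = (THE x. is_gate \<S> C p x)"

lemma is_gate_exists:
  assumes "closed_subbase X \<S>" "binary_family \<S>" "closedin X C" "C \<noteq> {}" "S_convex X \<S> C"
  shows "\<exists>x. is_gate \<S> C p x"
proof -
  let ?\<U> = "{S\<in>\<S>. p \<in> S \<and> S \<inter> C \<noteq> {}}"
  have compact: "compactin X C"
    using binary_closed_subbase_compact_space[OF assms(1,2)] assms(3) by (rule closedin_compact_space)
  moreover have "\<forall>U\<in>?\<U>. closedin X U"
    using closed_subbase_closedin[OF assms(1)] by simp
  moreover have "\<forall>\<F>. finite \<F> \<and> \<F> \<subseteq> ?\<U> \<longrightarrow> C \<inter> \<Inter>\<F> \<noteq> {}"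
    using binary_convex_meets_finite_Inter[OF assms(1,2,4,5)] by blast
  ultimately have "C \<inter> \<Inter>?\<U> \<noteq> {}"
    using compact[unfolded compactin_fip, THEN conjunct2, THEN spec[of _ ?\<U>]] by blast
  then obtain x where "x \<in> C" "x \<in> \<Inter>?\<U>"
    by (meson IntD1 IntD2 ex_in_conv)
  then have "is_gate \<S> C p x"
    unfolding is_gate_def by auto
  then show ?thesis ..
qed

lemma is_gate_unique:
  assumes "closed_subbase X \<S>" "binary_family \<S>" "normal_family X \<S>" "t1_space X"
    and "p \<in> topspace X" "C \<subseteq> topspace X" "is_gate \<S> C p x" "is_gate \<S> C p y"
  shows "x = y"
proof (rule ccontr)
  assume "x \<noteq> y"
  have x: "x \<in> C" "\<And>S. S \<in> \<S> \<Longrightarrow> p \<in> S \<Longrightarrow> S \<inter> C \<noteq> {} \<Longrightarrow> x \<in> S"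
    and y: "y \<in> C" "\<And>S. S \<in> \<S> \<Longrightarrow> p \<in> S \<Longrightarrow> S \<inter> C \<noteq> {} \<Longrightarrow> y \<in> S"
    using assms(7,8) unfolding is_gate_def by blast+
  obtain S where S: "S \<in> \<S>" "x \<in> S" "y \<notin> S"
    using closed_subbase_separates_points[OF assms(1,4)] \<open>x \<noteq> y\<close> x(1) y(1) assms(6) by blast
  obtain T0 T1 where T: "T0 \<in> \<S>" "T1 \<in> \<S>" "y \<notin> T0" "T1 \<inter> S = {}" "T0 \<union> T1 = topspace X"
    using normal_binary_closed_subbase_screening[OF assms(1-4), of y S] S y(1) assms(6) by blast
  have "x \<in> T0" "y \<in> T1"
    using S T x(1) y(1) assms(6) by blast+
  then consider "p \<in> T0" "T0 \<inter> C \<noteq> {}" | "p \<in> T1" "T1 \<inter> C \<noteq> {}"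
    using T(5) assms(5) x(1) y(1) by blast
  then show False
    using x(2) y(2) T S by cases blast+
qed

lemma is_gate_gate:
  assumes "closed_subbase X \<S>" "binary_family \<S>" "normal_family X \<S>" "t1_space X"
    and "p \<in> topspace X" "closedin X C" "C \<noteq> {}" "S_convex X \<S> C"
  shows "is_gate \<S> C p (gate \<S> C p)"
  unfolding gate_def
proof (rule theI')
  show "\<exists>!x. is_gate \<S> C p x"
    using is_gate_exists[OF assms(1,2,6-8)] is_gate_unique[OF assms(1-5) closedin_subset[OF assms(6)]]
    by blast
qed

lemma gate_eq_self:
  assumes "closed_subbase X \<S>" "binary_family \<S>" "normal_family X \<S>" "t1_space X"
    and "p \<in> C" "closedin X C" "C \<noteq> {}" "S_convex X \<S> C"
  shows "gate \<S> C p = p"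
proof -
  have "C \<subseteq> topspace X"
    using assms(6) by (rule closedin_subset)
  moreover have "is_gate \<S> C p p"
    using assms(5) unfolding is_gate_def by blast
  ultimately show ?thesis
    using is_gate_unique[OF assms(1-4)] is_gate_gate[OF assms(1-4) _ assms(6-8)] assms(5) by blast
qed

lemma openin_gate_notin:
  assumes "closed_subbase X \<S>" "binary_family \<S>" "normal_family X \<S>" "t1_space X"
    and \<Phi>: "S_continuous Z X \<S> \<Phi>" "\<And>z. z \<in> topspace Z \<Longrightarrow> \<Phi> z \<subseteq> topspace X"
    and f: "continuous_map Z X f"
    and h: "\<And>z. z \<in> topspace Z \<Longrightarrow> is_gate \<S> (\<Phi> z) (f z) (h z)"
    and "S \<in> \<S>"
  shows "openin Z {z \<in> topspace Z. h z \<notin> S}"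
proof (cases "S = {}")
  case True
  then show ?thesis
    by simp
next
  case False
  have h_in: "h z \<in> \<Phi> z" "h z \<in> topspace X" if "z \<in> topspace Z" for z
    using h[OF that] \<Phi>(2)[OF that] unfolding is_gate_def by blast+
  have h_into: "h z \<in> T" if "z \<in> topspace Z" "T \<in> \<S>" "f z \<in> T" "T \<inter> \<Phi> z \<noteq> {}" for z T
    using h[OF that(1)] that(2-4) unfolding is_gate_def by blast
  show ?thesis
  proof (subst openin_subopen, intro ballI)
    fix z0 assume "z0 \<in> {z \<in> topspace Z. h z \<notin> S}"
    then have z0: "z0 \<in> topspace Z" "h z0 \<notin> S"
      by auto
    obtain T0 T1 where T: "T0 \<in> \<S>" "T1 \<in> \<S>" "h z0 \<notin> T0" "T1 \<inter> S = {}" "T0 \<union> T1 = topspace X"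
      using normal_binary_closed_subbase_screening[OF assms(1-4) h_in(2)[OF z0(1)] assms(9) z0(2) False]
      by blast
    have avoid: "z \<in> {z \<in> topspace Z. h z \<notin> S}" if "z \<in> topspace Z" "h z \<in> T1" for z
      using that T(4) by blast
    show "\<exists>W. openin Z W \<and> z0 \<in> W \<and> W \<subseteq> {z \<in> topspace Z. h z \<notin> S}"
    proof (cases "f z0 \<in> T0")
      case False
      text \<open>Near \<open>z0\<close> both \<open>f z\<close> and some point of \<open>\<Phi> z\<close> lie in \<open>T1\<close>, which then holds \<open>h z\<close>.\<close>
      let ?W = "{z \<in> topspace Z. f z \<in> topspace X - T0} \<inter> {z \<in> topspace Z. \<Phi> z \<inter> (topspace X - T0) \<noteq> {}}"
      have "openin Z ?W"
        using openin_continuous_map_preimage[OF f] closed_subbase_closedin[OF assms(1) T(1)] \<Phi>(1) T(1)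
        unfolding S_continuous_def by blast
      moreover have "z0 \<in> ?W"
        using z0(1) False h_in[OF z0(1)] T(3) continuous_map_image_subset_topspace[OF f] by blast
      moreover have "h z \<in> T1" if "z \<in> ?W" for z
      proof (rule h_into)
        show "f z \<in> T1" "T1 \<inter> \<Phi> z \<noteq> {}"
          using that T(5) by auto
      qed (use that T(2) in auto)
      ultimately show ?thesis
        using avoid by blast
    next
      case True
      let ?W = "{z \<in> topspace Z. \<Phi> z \<subseteq> topspace X - T0}"
      have "openin Z ?W"
        using \<Phi>(1) T(1) unfolding S_continuous_def by blast
      moreover have "z0 \<in> ?W"
        using h_into[OF z0(1) T(1) True] T(3) \<Phi>(2)[OF z0(1)] z0(1) by blast
      moreover have "h z \<in> T1" if "z \<in> ?W" for z
        using h_in(1)[of z] that T(5) by blast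
      ultimately show ?thesis
        using avoid by blast
    qed
  qed
qed

lemma gate_continuous_selection:
  assumes "closed_subbase X \<S>" "binary_family \<S>" "normal_family X \<S>" "t1_space X"
    and "S_continuous Z X \<S> \<Phi>"
    and \<Phi>: "\<And>z. z \<in> topspace Z \<Longrightarrow> \<Phi> z \<noteq> {} \<and> closedin X (\<Phi> z) \<and> S_convex X \<S> (\<Phi> z)"
    and f: "continuous_map Z X f"
  shows "continuous_map Z X (\<lambda>z. gate \<S> (\<Phi> z) (f z)) \<and> (\<forall>z\<in>topspace Z. gate \<S> (\<Phi> z) (f z) \<in> \<Phi> z)"
proof
  have \<Phi>_sub: "\<Phi> z \<subseteq> topspace X" if "z \<in> topspace Z" for z
    using \<Phi>[OF that] closedin_subset by blast
  have gate: "is_gate \<S> (\<Phi> z) (f z) (gate \<S> (\<Phi> z) (f z))" if "z \<in> topspace Z" for z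
    using is_gate_gate[OF assms(1-4)] \<Phi>[OF that] continuous_map_image_subset_topspace[OF f] that
    by blast
  then show in_\<Phi>: "\<forall>z\<in>topspace Z. gate \<S> (\<Phi> z) (f z) \<in> \<Phi> z"
    unfolding is_gate_def by blast
  show "continuous_map Z X (\<lambda>z. gate \<S> (\<Phi> z) (f z))"
  proof (rule continuous_map_into_closed_subbase[OF assms(1)])
    show "(\<lambda>z. gate \<S> (\<Phi> z) (f z)) \<in> topspace Z \<rightarrow> topspace X"
      using in_\<Phi> \<Phi>_sub by blast
    show "openin Z {z \<in> topspace Z. gate \<S> (\<Phi> z) (f z) \<notin> S}" if "S \<in> \<S>" for S
      using openin_gate_notin[OF assms(1-5) \<Phi>_sub f gate that] by blast
  qed
qed

theorem theorem1p1:
  fixes X :: "'a topology" and Z :: "'b topology"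
    and \<S> :: "'a set set" and \<Phi> :: "'b \<Rightarrow> 'a set"
    and A :: "'b set" and g :: "'b \<Rightarrow> 'a"
  assumes "tychonoff_space X" and "tychonoff_space Z"
    and "closed_subbase X \<S>" and "binary_family \<S>" and "normal_family X \<S>"
    and "S_continuous Z X \<S> \<Phi>"
    and "\<And>z. z \<in> topspace Z \<Longrightarrow> \<Phi> z \<noteq> {} \<and> closedin X (\<Phi> z) \<and> S_convex X \<S> (\<Phi> z)"
  shows "(\<exists>h. continuous_map Z X h \<and> (\<forall>z\<in>topspace Z. h z \<in> \<Phi> z)) \<and>
         (closedin Z A \<and>
          (\<forall>f. continuous_map (subtopology Z A) X f \<longrightarrow>
               (\<exists>h. continuous_map Z X h \<and> (\<forall>a\<in>A. h a = f a))) \<and>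
          continuous_map (subtopology Z A) X g \<and> (\<forall>a\<in>A. g a \<in> \<Phi> a)
         \<longrightarrow> (\<exists>h. continuous_map Z X h \<and> (\<forall>z\<in>topspace Z. h z \<in> \<Phi> z) \<and> (\<forall>a\<in>A. h a = g a)))"
proof -
  have t1: "t1_space X"
    using assms(1) unfolding tychonoff_space_def by blast
  have selection: "continuous_map Z X (\<lambda>z. gate \<S> (\<Phi> z) (f z)) \<and>
      (\<forall>z\<in>topspace Z. gate \<S> (\<Phi> z) (f z) \<in> \<Phi> z)" if "continuous_map Z X f" for f
    using assms(3-5) t1 assms(6,7) that by (rule gate_continuous_selection)
  obtain p where "continuous_map Z X (\<lambda>z. p)"
  proof (cases "topspace Z = {}")
    case False
    then obtain z0 p where "z0 \<in> topspace Z" "p \<in> \<Phi> z0"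
      using assms(7) by blast
    then show thesis
      using that assms(7) closedin_subset by fastforce
  qed (use that in simp)
  then show ?thesis
  proof (intro conjI impI, goal_cases)
    case 1
    then show ?case
      using selection by blast
  next
    case 2
    then obtain f where f: "continuous_map Z X f" "\<forall>a\<in>A. f a = g a"
      by blast
    have "A \<subseteq> topspace Z"
      using 2 closedin_subset by blast
    then have "\<forall>a\<in>A. gate \<S> (\<Phi> a) (f a) = g a"
      using f(2) 2 gate_eq_self[OF assms(3-5) t1] assms(7) by fastforce
    then show ?case
      using selection[OF f(1)] by blast
  qed
qed

end
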